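(* Let $(Z,d,\nu)$ be a compact metric measure space with $\nu$ a doubling Borel regular measure, and let $0<s<1$. If $E\subset Z$ is such that $\chi_E\in B^s_{1,1}(Z)$, then $\mathcal{H}^{-s}(\partial^*E)=0$.
   Context: A measure $\nu$ is doubling if there is $C_\nu\ge1$ with $0<\nu(B(x,2r))\le C_\nu\,\nu(B(x,r))<\infty$ for all $x\in Z$, $r>0$. For $0<s<1$, $B^s_{1,1}(Z)$ consists of those $u\in L^1(Z)$ with $\int_Z\int_Z\frac{|u(y)-u(x)|}{d(x,y)^s\,\nu(B(x,d(x,y)))}\,d\nu(y)\,d\nu(x)<\infty$. The measure-theoretic boundary $\partial^*E$ is the set of $x\in Z$ with $\limsup_{r\to0^+}\frac{\nu(B(x,r)\cap E)}{\nu(B(x,r))}>0$ and $\limsup_{r\to0^+}\frac{\nu(B(x,r)\setminus E)}{\nu(B(x,r))}>0$. For $t>0$, the codimension $t$ Hausdorff content is $\mathcal{H}^{-t}_r(A)=\inf\{\sum_i\frac{\nu(B_i)}{\mathrm{rad}(B_i)^t}: A\subset\bigcup_iB_i,\ \mathrm{rad}(B_i)\le r\}$ (countable covers by balls) and the codimension $t$ Hausdorff measure is $\mathcal{H}^{-t}(A)=\lim_{r\to0^+}\mathcal{H}^{-t}_r(A)$. *)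

theory Defs
  imports "HOL-Analysis.Analysis" "HOL-Library.Liminf_Limsup"
begin

text \<open>Doubling measure on a metric space (whole type is the space Z).\<close>
definition doubling_measure :: "'a::metric_space measure \<Rightarrow> bool" where
  "doubling_measure M \<longleftrightarrow> (\<exists>C::real. C \<ge> 1 \<and>
     (\<forall>x r. r > 0 \<longrightarrow>
        0 < emeasure M (ball x (2*r)) \<and>
        emeasure M (ball x (2*r)) \<le> ennreal C * emeasure M (ball x r) \<and>
        emeasure M (ball x r) < \<infinity>))"

definition borel_regular :: "'a::metric_space measure \<Rightarrow> bool" where
  "borel_regular M \<longleftrightarrow> sets borel \<subseteq> sets M \<and>
     (\<forall>A\<in>sets M. \<exists>B\<in>sets borel. A \<subseteq> B \<and> emeasure M B = emeasure M A)"

definition besov_11 :: "'a::metric_space measure \<Rightarrow> real \<Rightarrow> ('a \<Rightarrow> real) set" where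
  "besov_11 M s = {u. integrable M u \<and>
     (\<integral>\<^sup>+ x. (\<integral>\<^sup>+ y. ennreal (\<bar>u y - u x\<bar> /
         (dist x y powr s * measure M (ball x (dist x y)))) \<partial>M) \<partial>M) < \<infinity>}"

definition measure_boundary :: "'a::metric_space measure \<Rightarrow> 'a set \<Rightarrow> 'a set" where
  "measure_boundary M E = {x.
     Limsup (at_right 0) (\<lambda>r. ereal (measure M (ball x r \<inter> E) / measure M (ball x r))) > 0 \<and>
     Limsup (at_right 0) (\<lambda>r. ereal (measure M (ball x r - E) / measure M (ball x r))) > 0}"

definition codim_hausdorff_content ::
  "'a::metric_space measure \<Rightarrow> real \<Rightarrow> real \<Rightarrow> 'a set \<Rightarrow> ennreal" where
  "codim_hausdorff_content M t r A =
     (INF C \<in> {C :: ('a \<times> real) set. countable C \<and>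
                  (\<forall>(x,\<rho>)\<in>C. 0 < \<rho> \<and> \<rho> \<le> r) \<and> A \<subseteq> (\<Union>(x,\<rho>)\<in>C. ball x \<rho>)}.
        \<integral>\<^sup>+ b. emeasure M (ball (fst b) (snd b)) / ennreal (snd b powr t) \<partial>count_space C)"

text \<open>Codimension t Hausdorff measure: limit as r \<rightarrow> 0+, which (by monotonicity in r)
  is the supremum over r > 0.\<close>
definition codim_hausdorff :: "'a::metric_space measure \<Rightarrow> real \<Rightarrow> 'a set \<Rightarrow> ennreal" where
  "codim_hausdorff M t A = (SUP r \<in> {0<..}. codim_hausdorff_content M t r A)"

end

theory Submission
  imports Defs
begin

text \<open>At a point of the measure-theoretic boundary both \<open>E\<close> and its complement have positive
  upper density. Since doubling changes a density by at most the factor \<open>Cd\<close> from one dyadic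
  scale to the next, the two densities are simultaneously at least some \<open>c > 0\<close> on arbitrarily
  small balls. On such a ball \<open>B(x, r)\<close> the pairs \<open>z \<in> B \<inter> E\<close>, \<open>y \<in> B - E\<close> contribute at
  least a constant times \<open>\<mu>(B) / r^s\<close> to the Besov energy of the characteristic function of
  \<open>E\<close> restricted to pairs at distance \<open>< 2r\<close>, and \<open>\<mu>(B(x, 5r)) / (5r)^s\<close> is comparable to
  \<open>\<mu>(B) / r^s\<close>. A Vitali family of disjoint such balls of radius \<open>< \<delta>\<close>, enlarged five times,
  therefore bounds the codimension \<open>s\<close> content of these points by a constant times the energy
  of pairs at distance \<open>< 2\<delta>\<close>, which tends to \<open>0\<close> with \<open>\<delta>\<close> because the total energy is
  finite.\<close>

section \<open>The Vitali covering lemma in metric spaces\<close>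

lemma cball_subset_ball_if_meets:
  fixes x y :: "'a::metric_space"
  assumes "\<not> disjnt (cball x r) (cball y R)" "r < 2 * R"
  shows "cball x r \<subseteq> ball y (5 * R)"
proof
  obtain w where "dist x w \<le> r" "dist y w \<le> R"
    using assms(1) unfolding disjnt_def by auto
  fix v assume "v \<in> cball x r"
  then have "dist y v \<le> dist y w + dist w x + dist x v"
    by (metis dist_commute dist_triangle add_right_mono order_trans)
  also have "\<dots> < 5 * R"
    using \<open>dist x w \<le> r\<close> \<open>dist y w \<le> R\<close> \<open>v \<in> cball x r\<close> assms(2)
    by (simp add: dist_commute)
  finally show "v \<in> ball y (5 * R)"
    by simp
qed

text \<open>A maximal admissible family meets every ball; a ball meeting a member of more than
  half its radius lies in the fivefold enlargement of that member.\<close>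

definition Vitali_admissible :: "('a::metric_space \<Rightarrow> real) \<Rightarrow> 'a set \<Rightarrow> 'a set set" where
  "Vitali_admissible r K = {C. C \<subseteq> K \<and> pairwise (\<lambda>x y. disjnt (cball x (r x)) (cball y (r y))) C \<and>
     (\<forall>x\<in>K. \<forall>y\<in>C. \<not> disjnt (cball x (r x)) (cball y (r y)) \<longrightarrow>
        (\<exists>z\<in>C. \<not> disjnt (cball x (r x)) (cball z (r z)) \<and> r x < 2 * r z))}"

lemma Vitali_admissible_Union_chain:
  assumes "\<C> \<in> chains (Vitali_admissible r K)"
  shows "\<Union>\<C> \<in> Vitali_admissible r K"
proof -
  have "pairwise (\<lambda>x y. disjnt (cball x (r x)) (cball y (r y))) (\<Union>\<C>)"
    using assms unfolding chains_def Vitali_admissible_def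
    by (intro pairwise_chain_Union) auto
  moreover have "\<exists>z\<in>\<Union>\<C>. \<not> disjnt (cball x (r x)) (cball z (r z)) \<and> r x < 2 * r z"
    if x: "x \<in> K" and y: "y \<in> \<Union>\<C>" and meets: "\<not> disjnt (cball x (r x)) (cball y (r y))" for x y
  proof -
    obtain D where "D \<in> \<C>" "y \<in> D"
      using y by blast
    moreover have "D \<in> Vitali_admissible r K"
      using assms \<open>D \<in> \<C>\<close> unfolding chains_def by blast
    ultimately show ?thesis
      using x meets unfolding Vitali_admissible_def by blast
  qed
  moreover have "\<Union>\<C> \<subseteq> K"
    using assms unfolding chains_def Vitali_admissible_def by blast
  ultimately show ?thesis
    unfolding Vitali_admissible_def by blast
qed

lemma Vitali_admissible_maximal_meets:
  assumes r: "\<And>x. x \<in> K \<Longrightarrow> 0 < r x \<and> r x \<le> B"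
    and C: "C \<in> Vitali_admissible r K"
    and maximal: "\<And>C'. C' \<in> Vitali_admissible r K \<Longrightarrow> C \<subseteq> C' \<Longrightarrow> C' = C"
    and "x \<in> K"
  shows "\<exists>y\<in>C. \<not> disjnt (cball x (r x)) (cball y (r y))"
proof (rule ccontr)
  assume unmet: "\<not> (\<exists>y\<in>C. \<not> disjnt (cball x (r x)) (cball y (r y)))"
  define K' where "K' = {x\<in>K. \<forall>y\<in>C. disjnt (cball x (r x)) (cball y (r y))}"
  have "x \<in> K'" "bdd_above (r ` K')"
    using unmet \<open>x \<in> K\<close> r unfolding K'_def bdd_above_def by auto
  moreover have "Sup (r ` K') / 2 < Sup (r ` K')"
    using cSUP_upper[OF calculation] r[OF \<open>x \<in> K\<close>] by linarith
  ultimately obtain z where z: "z \<in> K'" "Sup (r ` K') / 2 < r z"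
    using less_cSUP_iff[of K' r "Sup (r ` K') / 2"] by (metis empty_iff)
  have "r y < 2 * r z" if "y \<in> K'" for y
    using cSUP_upper[OF that \<open>bdd_above (r ` K')\<close>] z(2) by linarith
  then have "insert z C \<in> Vitali_admissible r K"
    using z(1) C unfolding Vitali_admissible_def K'_def
    by (auto simp: pairwise_insert disjnt_sym)
  then have "z \<in> C"
    using maximal by blast
  moreover have "\<not> disjnt (cball z (r z)) (cball z (r z))"
    using r z(1) unfolding K'_def disjnt_def by force
  ultimately show False
    using z(1) unfolding K'_def by blast
qed

lemma Vitali_covering_lemma_metric:
  fixes r :: "'a::metric_space \<Rightarrow> real"
  assumes r: "\<And>x. x \<in> K \<Longrightarrow> 0 < r x \<and> r x \<le> B"
  obtains C where "C \<subseteq> K" "pairwise (\<lambda>x y. disjnt (cball x (r x)) (cball y (r y))) C"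
    "\<And>x. x \<in> K \<Longrightarrow> \<exists>y\<in>C. cball x (r x) \<subseteq> ball y (5 * r y)"
proof -
  have "\<exists>C\<in>Vitali_admissible r K. \<forall>C'\<in>Vitali_admissible r K. C \<subseteq> C' \<longrightarrow> C' = C"
    using Vitali_admissible_Union_chain by (intro Zorn_Lemma) blast
  then obtain C where C: "C \<in> Vitali_admissible r K"
    and maximal: "\<And>C'. C' \<in> Vitali_admissible r K \<Longrightarrow> C \<subseteq> C' \<Longrightarrow> C' = C"
    by blast
  show thesis
  proof
    show "C \<subseteq> K" "pairwise (\<lambda>x y. disjnt (cball x (r x)) (cball y (r y))) C"
      using C unfolding Vitali_admissible_def by auto
  next
    fix x assume "x \<in> K"
    then obtain y where "y \<in> C" "\<not> disjnt (cball x (r x)) (cball y (r y))"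
      using Vitali_admissible_maximal_meets[OF r C maximal] by blast
    then obtain z where "z \<in> C" "\<not> disjnt (cball x (r x)) (cball z (r z))" "r x < 2 * r z"
      using C \<open>x \<in> K\<close> unfolding Vitali_admissible_def by blast
    then show "\<exists>y\<in>C. cball x (r x) \<subseteq> ball y (5 * r y)"
      using cball_subset_ball_if_meets by blast
  qed
qed

section \<open>Scales at which two complementary ratios are both large\<close>

lemma less_LimsupD:
  assumes "y < Limsup F (f :: _ \<Rightarrow> 'a :: complete_linorder)"
  shows "\<exists>\<^sub>F x in F. y < f x"
proof (rule ccontr)
  assume "\<not> ?thesis"
  then have "eventually (\<lambda>x. f x \<le> y) F"
    by (simp add: not_frequently not_less)
  with assms show False
    using Limsup_bounded leD by blast
qed

lemma Limsup_pos_frequently_less: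
  fixes f :: "'b \<Rightarrow> real"
  assumes "0 < Limsup F (\<lambda>x. ereal (f x))"
  obtains a where "0 < a" "\<exists>\<^sub>F x in F. a < f x"
proof -
  obtain a where "0 < ereal a" "ereal a < Limsup F (\<lambda>x. ereal (f x))"
    using ereal_dense2[OF assms] by blast
  moreover have "\<exists>\<^sub>F x in F. a < f x"
    using less_LimsupD[OF calculation(2)] by simp
  ultimately show thesis
    using that by simp
qed

lemma doubling_ratio_eventually_small:
  fixes f :: "real \<Rightarrow> real"
  assumes quasi_mono: "\<And>r r'. 0 < r' \<Longrightarrow> r' \<le> r \<Longrightarrow> r \<le> 2 * r' \<Longrightarrow> f r' \<le> Cd * f r"
    and dichotomy: "\<And>r. 0 < r \<Longrightarrow> r \<le> r1 \<Longrightarrow> f r < c \<or> 1 - f r < c"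
    and "0 \<le> Cd" "c + Cd * c \<le> 1" "0 < r1" "f r1 < c"
  shows "\<forall>\<^sub>F r in at_right 0. f r < c"
proof -
  have "f t < c" if "r1 / 2 ^ n \<le> t" "t \<le> r1" for n t
    using that
  proof (induction n arbitrary: t)
    case 0
    with \<open>f r1 < c\<close> show ?case by simp
  next
    case (Suc n)
    define q where "q = r1 / 2 ^ n"
    show ?case
    proof (cases "q \<le> t")
      case True
      with Suc show ?thesis unfolding q_def by blast
    next
      case False
      have "0 < t"
        using Suc.prems(1) \<open>0 < r1\<close> by (smt (verit) divide_pos_pos zero_less_power)
      moreover have "q \<le> 2 * t" "q \<le> r1"
        using Suc.prems \<open>0 < r1\<close> unfolding q_def by (auto simp: field_simps)
      moreover have "f q < c"
        using Suc.IH \<open>q \<le> r1\<close> unfolding q_def by blast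
      \<comment> \<open>one dyadic step raises the ratio at most to \<open>Cd * c\<close>, which rules out \<open>1 - f t < c\<close>\<close>
      ultimately have "f t \<le> Cd * c"
        using False quasi_mono[of t q] \<open>0 \<le> Cd\<close>
        by (smt (verit) mult_left_mono)
      then have "\<not> 1 - f t < c"
        using \<open>c + Cd * c \<le> 1\<close> by linarith
      with dichotomy show ?thesis
        using \<open>0 < t\<close> Suc.prems(2) by blast
    qed
  qed
  moreover have "\<exists>n. r1 / 2 ^ n \<le> r" if "0 < r" for r
  proof -
    obtain n where "(1 / 2) ^ n < r / r1"
      using real_arch_pow_inv[of "r / r1" "1 / 2"] \<open>0 < r\<close> \<open>0 < r1\<close> by auto
    then have "r1 / 2 ^ n \<le> r"
      using \<open>0 < r1\<close> by (simp add: field_simps power_divide)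
    then show ?thesis ..
  qed
  ultimately show ?thesis
    unfolding eventually_at_right_field using \<open>0 < r1\<close> by (meson less_imp_le)
qed

lemma frequently_doubling_ratios_large:
  fixes f :: "real \<Rightarrow> real"
  assumes quasi_mono: "\<And>r r'. 0 < r' \<Longrightarrow> r' \<le> r \<Longrightarrow> r \<le> 2 * r' \<Longrightarrow> f r' \<le> Cd * f r"
    and quasi_mono': "\<And>r r'. 0 < r' \<Longrightarrow> r' \<le> r \<Longrightarrow> r \<le> 2 * r' \<Longrightarrow> 1 - f r' \<le> Cd * (1 - f r)"
    and "1 \<le> Cd" "0 < a" "a \<le> 1"
    and large: "\<exists>\<^sub>F r in at_right 0. a < f r" and large': "\<exists>\<^sub>F r in at_right 0. a < 1 - f r"
  shows "\<exists>\<^sub>F r in at_right 0. a / (2 * Cd) \<le> f r \<and> a / (2 * Cd) \<le> 1 - f r"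
proof (rule ccontr)
  define c where "c = a / (2 * Cd)"
  have "c \<le> a / 2" "Cd * c = a / 2"
    using \<open>1 \<le> Cd\<close> \<open>0 < a\<close> unfolding c_def by (auto simp: divide_le_eq mult_le_cancel_left1)
  then have c: "c + Cd * c \<le> 1" "c < a"
    using \<open>0 < a\<close> \<open>a \<le> 1\<close> by linarith+
  have never_large: "\<not> (\<exists>\<^sub>F r in at_right 0. a < h r)" if "\<forall>\<^sub>F r in at_right 0. h r < c" for h
    using that c(2) by (simp add: not_frequently) (auto elim: eventually_mono)
  assume "\<not> ?thesis"
  then have "eventually (\<lambda>r. f r < c \<or> 1 - f r < c) (at_right 0)"
    unfolding c_def not_frequently by (simp add: not_le)
  then obtain r0 where "0 < r0" and bad: "\<And>r. 0 < r \<Longrightarrow> r < r0 \<Longrightarrow> f r < c \<or> 1 - f r < c"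
    unfolding eventually_at_right_field by auto
  define r1 where "r1 = r0 / 2"
  have "0 < r1" and bad1: "\<And>r. 0 < r \<Longrightarrow> r \<le> r1 \<Longrightarrow> f r < c \<or> 1 - f r < c"
    using \<open>0 < r0\<close> bad unfolding r1_def by auto
  then consider "f r1 < c" | "1 - f r1 < c"
    by blast
  then show False
  proof cases
    case 1
    have "\<forall>\<^sub>F r in at_right 0. f r < c"
      by (rule doubling_ratio_eventually_small[of f Cd r1 c, OF quasi_mono bad1])
        (use 1 \<open>1 \<le> Cd\<close> c(1) \<open>0 < r1\<close> in auto)
    with large never_large show False
      by blast
  next
    case 2
    have "\<forall>\<^sub>F r in at_right 0. 1 - f r < c"
      by (rule doubling_ratio_eventually_small[of "\<lambda>r. 1 - f r" Cd r1 c, OF quasi_mono'])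
        (use 2 bad1 \<open>1 \<le> Cd\<close> c(1) \<open>0 < r1\<close> in force)+
    with large' never_large[of "\<lambda>r. 1 - f r"] show False
      by blast
  qed
qed

section \<open>Codimension Hausdorff content\<close>

definition ball_covers :: "real \<Rightarrow> 'a::metric_space set \<Rightarrow> ('a \<times> real) set set" where
  "ball_covers \<rho> A = {C. countable C \<and> (\<forall>(x, r)\<in>C. 0 < r \<and> r \<le> \<rho>) \<and> A \<subseteq> (\<Union>(x, r)\<in>C. ball x r)}"

text \<open>The cost of a cover is its measure for a weighted counting measure, which makes countable
  subadditivity available.\<close>

definition ball_cost :: "'a::metric_space measure \<Rightarrow> real \<Rightarrow> ('a \<times> real) measure" where
  "ball_cost M t = density (count_space UNIV) (\<lambda>(x, r). emeasure M (ball x r) / ennreal (r powr t))"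

lemma codim_hausdorff_content_eq:
  "codim_hausdorff_content M t \<rho> A = (INF C\<in>ball_covers \<rho> A. emeasure (ball_cost M t) C)"
  unfolding codim_hausdorff_content_def ball_covers_def ball_cost_def
  by (simp add: emeasure_density nn_integral_count_space_indicator split_beta')

lemma codim_hausdorff_content_mono:
  "A \<subseteq> B \<Longrightarrow> codim_hausdorff_content M t \<rho> A \<le> codim_hausdorff_content M t \<rho> B"
  unfolding codim_hausdorff_content_eq ball_covers_def by (rule INF_superset_mono) auto

lemma codim_hausdorff_content_le_cover:
  fixes R :: "'a::metric_space \<Rightarrow> real"
  assumes "countable C" "\<And>x. x \<in> C \<Longrightarrow> 0 < R x \<and> R x \<le> \<rho>" "A \<subseteq> (\<Union>x\<in>C. ball x (R x))"
  shows "codim_hausdorff_content M t \<rho> A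
    \<le> (\<integral>\<^sup>+ x. emeasure M (ball x (R x)) / ennreal (R x powr t) \<partial>count_space C)"
proof -
  let ?cover = "(\<lambda>x. (x, R x)) ` C"
  have "?cover \<in> ball_covers \<rho> A"
    using assms unfolding ball_covers_def by auto
  then have "codim_hausdorff_content M t \<rho> A
      \<le> (\<integral>\<^sup>+ b. emeasure M (ball (fst b) (snd b)) / ennreal (snd b powr t) \<partial>count_space ?cover)"
    unfolding codim_hausdorff_content_def ball_covers_def by (rule INF_lower)
  also have "\<dots> = (\<integral>\<^sup>+ x. emeasure M (ball x (R x)) / ennreal (R x powr t) \<partial>count_space C)"
    by (subst nn_integral_bij_count_space[symmetric, of "\<lambda>x. (x, R x)" C])
       (auto simp: bij_betw_def inj_on_def)
  finally show ?thesis .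
qed

lemma codim_hausdorff_content_UN_eq_0:
  fixes A :: "nat \<Rightarrow> 'a::metric_space set"
  assumes null: "\<And>k. codim_hausdorff_content M t \<rho> (A k) = 0"
  shows "codim_hausdorff_content M t \<rho> (\<Union>k. A k) = 0"
proof -
  have le_e: "codim_hausdorff_content M t \<rho> (\<Union>k. A k) \<le> 0 + ennreal e" if "0 < e" for e
  proof -
    have "\<exists>C\<in>ball_covers \<rho> (A k). emeasure (ball_cost M t) C < ennreal (e * (1 / 2) ^ Suc k)" for k
    proof -
      have "(INF C\<in>ball_covers \<rho> (A k). emeasure (ball_cost M t) C) < ennreal (e * (1 / 2) ^ Suc k)"
        using null[of k] \<open>0 < e\<close> unfolding codim_hausdorff_content_eq by simp
      then show ?thesis
        by (simp only: INF_less_iff)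
    qed
    then obtain C where C: "\<And>k. C k \<in> ball_covers \<rho> (A k)"
      and small: "\<And>k. emeasure (ball_cost M t) (C k) < ennreal (e * (1 / 2) ^ Suc k)"
      by (metis (no_types, lifting))
    have "countable (C k)" "\<forall>(x, r)\<in>C k. 0 < r \<and> r \<le> \<rho>" "A k \<subseteq> (\<Union>(x, r)\<in>C k. ball x r)" for k
      using C[of k] unfolding ball_covers_def by blast+
    then have "(\<Union>k. C k) \<in> ball_covers \<rho> (\<Union>k. A k)"
      unfolding ball_covers_def by (auto simp: subset_iff) meson
    then have "codim_hausdorff_content M t \<rho> (\<Union>k. A k) \<le> emeasure (ball_cost M t) (\<Union>k. C k)"
      unfolding codim_hausdorff_content_eq by (rule INF_lower)
    also have "\<dots> \<le> (\<Sum>k. emeasure (ball_cost M t) (C k))"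
      by (rule emeasure_subadditive_countably) (simp add: ball_cost_def)
    also have "\<dots> \<le> (\<Sum>k. ennreal (e * (1 / 2) ^ Suc k))"
      using small by (intro suminf_le) (auto intro: less_imp_le)
    also have "\<dots> = ennreal e"
      using sums_mult[OF power_half_series, of e] \<open>0 < e\<close>
      by (subst suminf_ennreal2) (auto simp: sums_iff)
    finally show ?thesis
      by simp
  qed
  have "codim_hausdorff_content M t \<rho> (\<Union>k. A k) \<le> 0"
    using le_e by (rule ennreal_le_epsilon)
  then show ?thesis
    by simp
qed

lemma nn_integral_INF_eq_0:
  fixes f :: "nat \<Rightarrow> 'a \<Rightarrow> ennreal"
  assumes "\<And>i x. f (Suc i) x \<le> f i x" "\<And>i. f i \<in> borel_measurable M"
    and "(\<integral>\<^sup>+ x. f 0 x \<partial>M) < \<infinity>" and "AE x in M. (INF i. f i x) = 0"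
  shows "(INF i. integral\<^sup>N M (f i)) = 0"
proof -
  have "(INF i. integral\<^sup>N M (f i)) = (\<integral>\<^sup>+ x. (INF i. f i x) \<partial>M)"
    using assms(1-3) by (intro nn_integral_monotone_convergence_INF_AE'[symmetric]) auto
  also have "\<dots> = 0"
    using assms(4) by (simp add: nn_integral_cong_AE)
  finally show ?thesis .
qed

lemma nn_integral_disjoint_family_on_le:
  fixes f :: "'a \<Rightarrow> ennreal"
  assumes "countable C" "disjoint_family_on B C" "\<And>j. j \<in> C \<Longrightarrow> B j \<in> sets M"
    and "f \<in> borel_measurable M"
  shows "(\<integral>\<^sup>+ j. (\<integral>\<^sup>+ x\<in>B j. f x \<partial>M) \<partial>count_space C) \<le> (\<integral>\<^sup>+ x. f x \<partial>M)"
proof -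
  have "(\<integral>\<^sup>+ j. (\<integral>\<^sup>+ x\<in>B j. f x \<partial>M) \<partial>count_space C)
      = (\<integral>\<^sup>+ x. (\<integral>\<^sup>+ j. f x * indicator (B j) x \<partial>count_space C) \<partial>M)"
    using assms by (intro nn_integral_count_space_nn_integral[symmetric]) auto
  also have "\<dots> \<le> (\<integral>\<^sup>+ x. f x \<partial>M)"
  proof (intro nn_integral_mono)
    fix x
    show "(\<integral>\<^sup>+ j. f x * indicator (B j) x \<partial>count_space C) \<le> f x"
    proof (cases "\<exists>j\<in>C. x \<in> B j")
      case True
      then obtain i where "i \<in> C" "x \<in> B i"
        by blast
      then have "f x * indicator (B j) x = f x * indicator {i} j" if "j \<in> C" for j
        using \<open>disjoint_family_on B C\<close> that unfolding disjoint_family_on_def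
        by (cases "j = i") (auto simp: indicator_def)
      then have "(\<integral>\<^sup>+ j. f x * indicator (B j) x \<partial>count_space C) = (\<integral>\<^sup>+ j. f x * indicator {i} j \<partial>count_space C)"
        by (intro nn_integral_cong) auto
      also have "\<dots> = f x"
        using \<open>i \<in> C\<close> by (simp add: nn_integral_cmult_indicator)
      finally show ?thesis
        by simp
    next
      case False
      then have "(\<integral>\<^sup>+ j. f x * indicator (B j) x \<partial>count_space C) = (\<integral>\<^sup>+ j. 0 \<partial>count_space C)"
        by (intro nn_integral_cong) auto
      then show ?thesis
        by simp
    qed
  qed
  finally show ?thesis .
qed

lemma compact_UNIV_countable_dense:
  assumes "compact (UNIV :: 'a::metric_space set)"
  obtains Q :: "'a::metric_space set" where "countable Q" "\<And>x e. 0 < e \<Longrightarrow> \<exists>q\<in>Q. dist q x < e"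
proof -
  have "\<exists>F. finite F \<and> (\<forall>x::'a. \<exists>q\<in>F. dist q x < 1 / Suc n)" for n
    using assms unfolding compact_eq_totally_bounded by (simp add: subset_iff)
  then obtain F :: "nat \<Rightarrow> 'a set"
    where F: "\<And>n. finite (F n)" "\<And>n x. \<exists>q\<in>F n. dist q x < 1 / Suc n"
    by metis
  show thesis
  proof (rule that)
    show "countable (\<Union>n. F n)"
      using F(1) by (blast intro: countable_UN countable_finite)
  next
    fix x :: 'a and e :: real assume "0 < e"
    then obtain n where "1 / Suc n < e"
      using nat_approx_posE by blast
    with F(2)[of n x] show "\<exists>q\<in>\<Union>n. F n. dist q x < e"
      by force
  qed
qed

lemma (in finite_measure) countable_disjoint_family_on_pos_measure:
  assumes disj: "disjoint_family_on A I" and sets: "\<And>i. i \<in> I \<Longrightarrow> A i \<in> sets M"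
    and pos: "\<And>i. i \<in> I \<Longrightarrow> 0 < measure M (A i)"
  shows "countable I"
proof -
  define S where "S n = {i\<in>I. 1 / Suc n < measure M (A i)}" for n :: nat
  have "finite (S n)" for n
  proof (rule ccontr)
    assume "infinite (S n)"
    obtain N :: nat where N: "Suc n * measure M (space M) < N"
      using reals_Archimedean2 by blast
    obtain T where T: "finite T" "card T = N" "T \<subseteq> S n"
      using infinite_arbitrarily_large[OF \<open>infinite (S n)\<close>] by blast
    have "real N / Suc n = (\<Sum>i\<in>T. 1 / Suc n)"
      using T(2) by simp
    also have "\<dots> \<le> (\<Sum>i\<in>T. measure M (A i))"
      using T(3) unfolding S_def by (intro sum_mono) auto
    also have "\<dots> = measure M (\<Union>i\<in>T. A i)"
      using T disj sets unfolding S_def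
      by (intro finite_measure_finite_Union[symmetric]) (auto intro: disjoint_family_on_mono)
    also have "\<dots> \<le> measure M (space M)"
      using T(3) sets unfolding S_def by (intro bounded_measure)
    finally show False
      using N by (simp add: field_simps)
  qed
  moreover have "I = (\<Union>n. S n)"
  proof (intro equalityI subsetI)
    fix i assume "i \<in> I"
    then obtain n where "1 / Suc n < measure M (A i)"
      using pos nat_approx_posE by blast
    with \<open>i \<in> I\<close> show "i \<in> (\<Union>n. S n)"
      unfolding S_def by blast
  qed (auto simp: S_def)
  ultimately show ?thesis
    by (metis countable_UN countable_finite UNIV_I countableI_type)
qed

section \<open>Compact doubling metric measure spaces\<close>

locale compact_doubling_space =
  fixes M :: "'a::metric_space measure" and Cd :: real
  assumes compact_UNIV: "compact (UNIV :: 'a set)"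
    and space_eq: "space M = UNIV"
    and sets_borel: "sets borel \<subseteq> sets M"
    and doubling_const: "1 \<le> Cd"
    and doubling: "\<And>x r. 0 < r \<Longrightarrow> 0 < emeasure M (ball x (2 * r)) \<and>
      emeasure M (ball x (2 * r)) \<le> ennreal Cd * emeasure M (ball x r) \<and> emeasure M (ball x r) < \<infinity>"
begin

lemma sets_ball [measurable]: "ball x r \<in> sets M"
  using sets_borel borel_open[OF open_ball] by blast

lemma borel_measurable_continuous:
  "continuous_on UNIV f \<Longrightarrow> f \<in> borel_measurable M"
  using borel_measurable_subalgebra[OF sets_borel] space_eq borel_measurable_continuous_onI
  by (metis space_borel)

sublocale finite_measure M
proof
  obtain F where "finite F" "(UNIV :: 'a set) \<subseteq> (\<Union>x\<in>F. ball x 1)"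
    using compact_UNIV unfolding compact_eq_totally_bounded by (meson zero_less_one)
  then have "emeasure M (space M) \<le> emeasure M (\<Union>x\<in>F. ball x 1)"
    unfolding space_eq by (intro emeasure_mono) auto
  also have "\<dots> \<le> (\<Sum>x\<in>F. emeasure M (ball x 1))"
    using \<open>finite F\<close> by (intro emeasure_subadditive_finite) auto
  also have "\<dots> < \<infinity>"
    using doubling[of 1] \<open>finite F\<close> by simp
  finally show "emeasure M (space M) \<noteq> \<infinity>"
    by simp
qed

lemma emeasure_ball: "emeasure M (ball x r) = ennreal (measure M (ball x r))"
  by (simp add: emeasure_eq_measure)

lemma measure_ball_pos: "0 < r \<Longrightarrow> 0 < measure M (ball x r)"
  using doubling[of "r / 2" x] by (simp add: emeasure_ball)

lemma measure_ball_double: "0 < r \<Longrightarrow> measure M (ball x (2 * r)) \<le> Cd * measure M (ball x r)"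
  using doubling[of r x] doubling_const
  by (simp add: emeasure_ball ennreal_mult[symmetric] ennreal_le_iff)

lemma measure_ball_mono: "r \<le> r' \<Longrightarrow> measure M (ball x r) \<le> measure M (ball x r')"
  by (intro finite_measure_mono) auto

definition ball_density :: "'a set \<Rightarrow> 'a \<Rightarrow> real \<Rightarrow> real" where
  "ball_density S x r = measure M (ball x r \<inter> S) / measure M (ball x r)"

lemma ball_density_doubling:
  assumes "0 < r'" "r' \<le> r" "r \<le> 2 * r'" "S \<in> sets M"
  shows "ball_density S x r' \<le> Cd * ball_density S x r"
proof -
  have "measure M (ball x r' \<inter> S) \<le> measure M (ball x r \<inter> S)"
    using assms by (intro finite_measure_mono) auto
  moreover have "measure M (ball x r) \<le> Cd * measure M (ball x r')"
    using measure_ball_mono[of r "2 * r'" x] measure_ball_double[of r' x] assms by linarith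
  ultimately have "measure M (ball x r) * measure M (ball x r' \<inter> S)
      \<le> (Cd * measure M (ball x r')) * measure M (ball x r \<inter> S)"
    using doubling_const by (intro mult_mono) auto
  moreover have "0 < measure M (ball x r')" "0 < measure M (ball x r)"
    using measure_ball_pos assms by auto
  ultimately show ?thesis
    unfolding ball_density_def by (simp add: field_simps)
qed

lemma ball_density_Compl:
  assumes "0 < r" "S \<in> sets M"
  shows "ball_density (- S) x r = 1 - ball_density S x r"
proof -
  have "measure M (ball x r \<inter> - S) = measure M (ball x r) - measure M (ball x r \<inter> S)"
    using assms(2) finite_measure_Diff'[of "ball x r" S] by (simp add: Diff_eq)
  then show ?thesis
    using measure_ball_pos[OF assms(1), of x] unfolding ball_density_def
    by (simp add: diff_divide_distrib)
qed

definition ball_splits :: "'a set \<Rightarrow> real \<Rightarrow> 'a \<Rightarrow> real \<Rightarrow> bool" where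
  "ball_splits E c x r \<longleftrightarrow>
    c * measure M (ball x r) \<le> measure M (ball x r \<inter> E) \<and> c * measure M (ball x r) \<le> measure M (ball x r - E)"

lemma ball_splits_iff_density:
  "0 < r \<Longrightarrow> ball_splits E c x r \<longleftrightarrow> c \<le> ball_density E x r \<and> c \<le> ball_density (- E) x r"
  unfolding ball_splits_def ball_density_def using measure_ball_pos[of r x]
  by (simp add: le_divide_eq Diff_eq)

lemma frequently_Vitali_cover:
  fixes A :: "'a set"
  assumes "\<And>x. x \<in> A \<Longrightarrow> \<exists>\<^sub>F r in at_right 0. P x r" "0 < \<delta>"
  obtains C R where "countable C" "C \<subseteq> A" "\<And>x. x \<in> C \<Longrightarrow> 0 < R x \<and> R x < \<delta> \<and> P x (R x)"
    "disjoint_family_on (\<lambda>x. ball x (R x)) C" "A \<subseteq> (\<Union>x\<in>C. ball x (5 * R x))"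
proof -
  have "\<exists>r. 0 < r \<and> r < \<delta> \<and> P x r" if "x \<in> A" for x
  proof -
    have "\<forall>\<^sub>F r in at_right 0. 0 < r \<and> r < \<delta>"
      using \<open>0 < \<delta>\<close> eventually_at_right_field by blast
    then have "\<exists>\<^sub>F r in at_right 0. P x r \<and> 0 < r \<and> r < \<delta>"
      using assms(1)[OF that] by (rule frequently_eventually_frequently[rotated])
    then show ?thesis
      by (auto dest: frequently_ex)
  qed
  then obtain R where R: "\<And>x. x \<in> A \<Longrightarrow> 0 < R x \<and> R x < \<delta> \<and> P x (R x)"
    using bchoice[of A "\<lambda>x r. 0 < r \<and> r < \<delta> \<and> P x r"] by blast
  then have "\<And>x. x \<in> A \<Longrightarrow> 0 < R x \<and> R x \<le> \<delta>"
    by (simp add: less_imp_le)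
  then obtain C where "C \<subseteq> A" and disj: "pairwise (\<lambda>x y. disjnt (cball x (R x)) (cball y (R y))) C"
    and cover: "\<And>x. x \<in> A \<Longrightarrow> \<exists>y\<in>C. cball x (R x) \<subseteq> ball y (5 * R y)"
    using Vitali_covering_lemma_metric[of A R \<delta>] by blast
  have disj_balls: "disjoint_family_on (\<lambda>x. ball x (R x)) C"
  proof (unfold disjoint_family_on_def, intro ballI impI)
    fix x y assume "x \<in> C" "y \<in> C" "x \<noteq> y"
    then have "disjnt (cball x (R x)) (cball y (R y))"
      using disj unfolding pairwise_def by blast
    then show "ball x (R x) \<inter> ball y (R y) = {}"
      using ball_subset_cball unfolding disjnt_def by blast
  qed
  moreover have "countable C"
    by (rule countable_disjoint_family_on_pos_measure[OF disj_balls])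
      (use R \<open>C \<subseteq> A\<close> measure_ball_pos in auto)
  moreover have "A \<subseteq> (\<Union>x\<in>C. ball x (5 * R x))"
  proof
    fix x assume "x \<in> A"
    then obtain y where "y \<in> C" "cball x (R x) \<subseteq> ball y (5 * R y)"
      using cover by blast
    moreover have "x \<in> cball x (R x)"
      using R[OF \<open>x \<in> A\<close>] by simp
    ultimately show "x \<in> (\<Union>x\<in>C. ball x (5 * R x))"
      by blast
  qed
  ultimately show thesis
    using that \<open>C \<subseteq> A\<close> R by blast
qed

lemma borel_measurable_dist_pair [measurable]:
  "(\<lambda>p. dist (fst p) (snd p)) \<in> borel_measurable (M \<Otimes>\<^sub>M M)"
proof -
  obtain Q :: "'a set" where "countable Q" and dense: "\<And>x e. 0 < e \<Longrightarrow> \<exists>q\<in>Q. dist q x < e"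
    using compact_UNIV_countable_dense[OF compact_UNIV] by blast
  have [measurable]: "(\<lambda>x. dist x q) \<in> borel_measurable M" for q
    by (intro borel_measurable_continuous continuous_intros)
  have "{p \<in> space (M \<Otimes>\<^sub>M M). dist (fst p) (snd p) < t}
    = (\<Union>q\<in>Q. {p \<in> space (M \<Otimes>\<^sub>M M). dist (fst p) q + dist (snd p) q < t})" for t
  proof (intro equalityI subsetI)
    fix p assume p: "p \<in> {p \<in> space (M \<Otimes>\<^sub>M M). dist (fst p) (snd p) < t}"
    then obtain q where "q \<in> Q" "dist q (fst p) < (t - dist (fst p) (snd p)) / 2"
      using dense[of "(t - dist (fst p) (snd p)) / 2" "fst p"] by auto
    moreover have "dist (snd p) q \<le> dist (fst p) (snd p) + dist q (fst p)"
      using dist_triangle[of "snd p" q "fst p"] by (simp add: dist_commute)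
    ultimately have "dist (fst p) q + dist (snd p) q < t"
      by (simp add: dist_commute)
    with \<open>q \<in> Q\<close> p show "p \<in> (\<Union>q\<in>Q. {p \<in> space (M \<Otimes>\<^sub>M M). dist (fst p) q + dist (snd p) q < t})"
      by blast
  next
    fix p assume "p \<in> (\<Union>q\<in>Q. {p \<in> space (M \<Otimes>\<^sub>M M). dist (fst p) q + dist (snd p) q < t})"
    then show "p \<in> {p \<in> space (M \<Otimes>\<^sub>M M). dist (fst p) (snd p) < t}"
      using dist_triangle2 le_less_trans by blast
  qed
  moreover have "(\<Union>q\<in>Q. {p \<in> space (M \<Otimes>\<^sub>M M). dist (fst p) q + dist (snd p) q < t}) \<in> sets (M \<Otimes>\<^sub>M M)" for t
    using \<open>countable Q\<close> by (intro sets.countable_UN') auto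
  ultimately show ?thesis
    unfolding borel_measurable_iff_less by simp
qed

lemma borel_measurable_dist [measurable (raw)]:
  "f \<in> measurable N M \<Longrightarrow> g \<in> measurable N M \<Longrightarrow> (\<lambda>w. dist (f w) (g w)) \<in> borel_measurable N"
  using measurable_compose[of "\<lambda>w. (f w, g w)" N "M \<Otimes>\<^sub>M M", OF _ borel_measurable_dist_pair]
  by simp

lemma borel_measurable_measure_ball_dist [measurable]:
  "(\<lambda>p. measure M (ball (fst p) (dist (fst p) (snd p)))) \<in> borel_measurable (M \<Otimes>\<^sub>M M)"
proof -
  let ?Q = "{w \<in> space ((M \<Otimes>\<^sub>M M) \<Otimes>\<^sub>M M). dist (fst (fst w)) (snd w) < dist (fst (fst w)) (snd (fst w))}"
  have "?Q \<in> sets ((M \<Otimes>\<^sub>M M) \<Otimes>\<^sub>M M)"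
    by measurable
  then have "(\<lambda>p. emeasure M (Pair p -` ?Q)) \<in> borel_measurable (M \<Otimes>\<^sub>M M)"
    by (rule measurable_emeasure_Pair)
  moreover have "Pair p -` ?Q = ball (fst p) (dist (fst p) (snd p))" for p
    using space_eq by (auto simp: space_pair_measure)
  ultimately show ?thesis
    by (simp add: measure_def)
qed

lemma borel_measurable_indicator_ball_dist [measurable]:
  "(\<lambda>p. indicator (ball (fst p) d) (snd p) :: ennreal) \<in> borel_measurable (M \<Otimes>\<^sub>M M)"
proof -
  have "(\<lambda>p. if dist (fst p) (snd p) < d then 1 else 0 :: ennreal) \<in> borel_measurable (M \<Otimes>\<^sub>M M)"
    by measurable
  then show ?thesis
    by (simp add: indicator_def)
qed

lemma nn_integral_shrinking_balls:
  assumes [measurable]: "f \<in> borel_measurable M" and "f x = 0" "(\<integral>\<^sup>+ y. f y \<partial>M) < \<infinity>"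
  shows "(INF i. (\<integral>\<^sup>+ y\<in>ball x (1 / Suc i). f y \<partial>M)) = 0"
proof (rule nn_integral_INF_eq_0)
  show "f y * indicator (ball x (1 / Suc (Suc i))) y \<le> f y * indicator (ball x (1 / Suc i)) y" for i y
    using subset_ball[of "1 / Suc (Suc i)" "1 / Suc i" x]
    by (intro mult_left_mono) (auto simp: frac_le indicator_def)
  show "(\<integral>\<^sup>+ y\<in>ball x (1 / Suc 0). f y \<partial>M) < \<infinity>"
    using assms(3) by (auto intro: order.strict_trans1[OF nn_integral_mono] simp: indicator_def)
  have "(INF i. f y * indicator (ball x (1 / Suc i)) y) = 0" for y
  proof (cases "y = x")
    case False
    then obtain i where "1 / Suc i < dist x y"
      using nat_approx_posE[of "dist x y"] by auto
    then show ?thesis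
      by (intro antisym INF_lower2[of i]) auto
  qed (simp add: \<open>f x = 0\<close>)
  then show "AE y in M. (INF i. f y * indicator (ball x (1 / Suc i)) y) = 0"
    by simp
qed measurable

lemma nn_integral_near_diagonal_small:
  fixes f :: "'a \<Rightarrow> 'a \<Rightarrow> ennreal"
  assumes [measurable]: "case_prod f \<in> borel_measurable (M \<Otimes>\<^sub>M M)"
    and diag: "\<And>x. f x x = 0" and fin: "(\<integral>\<^sup>+ x. (\<integral>\<^sup>+ y. f x y \<partial>M) \<partial>M) < \<infinity>" and "0 < e"
  shows "\<exists>d>0. (\<integral>\<^sup>+ x. (\<integral>\<^sup>+ y\<in>ball x d. f x y \<partial>M) \<partial>M) < e"
proof -
  have [measurable]: "f x \<in> borel_measurable M" for x
    using measurable_Pair2[OF assms(1), of x] by (simp add: space_eq)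
  have "AE x in M. (\<integral>\<^sup>+ y. f x y \<partial>M) \<noteq> \<infinity>"
    using fin by (intro nn_integral_PInf_AE) auto
  then have "AE x in M. (INF i. (\<integral>\<^sup>+ y\<in>ball x (1 / Suc i). f x y \<partial>M)) = 0"
    by eventually_elim (rule nn_integral_shrinking_balls, auto simp: diag less_top)
  then have "(INF i. (\<integral>\<^sup>+ x. (\<integral>\<^sup>+ y\<in>ball x (1 / Suc i). f x y \<partial>M) \<partial>M)) = 0"
  proof (rule nn_integral_INF_eq_0[rotated 3])
    show "(\<lambda>x. \<integral>\<^sup>+ y\<in>ball x (1 / Suc i). f x y \<partial>M) \<in> borel_measurable M" for i
      by measurable
    show "(\<integral>\<^sup>+ y\<in>ball x (1 / Suc (Suc i)). f x y \<partial>M) \<le> (\<integral>\<^sup>+ y\<in>ball x (1 / Suc i). f x y \<partial>M)" for i x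
      using subset_ball[of "1 / Suc (Suc i)" "1 / Suc i" x]
      by (intro nn_integral_mono mult_left_mono) (auto simp: frac_le indicator_def)
    have "(\<integral>\<^sup>+ y\<in>ball x (1 / Suc 0). f x y \<partial>M) \<le> (\<integral>\<^sup>+ y. f x y \<partial>M)" for x
      by (intro nn_integral_mono) (simp add: indicator_def)
    then show "(\<integral>\<^sup>+ x. (\<integral>\<^sup>+ y\<in>ball x (1 / Suc 0). f x y \<partial>M) \<partial>M) < \<infinity>"
      using fin by (meson nn_integral_mono order.strict_trans1)
  qed
  then have "(INF i. (\<integral>\<^sup>+ x. (\<integral>\<^sup>+ y\<in>ball x (1 / Suc i). f x y \<partial>M) \<partial>M)) < e"
    using \<open>0 < e\<close> by simp
  then obtain i where "(\<integral>\<^sup>+ x. (\<integral>\<^sup>+ y\<in>ball x (1 / Suc i). f x y \<partial>M) \<partial>M) < e"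
    unfolding INF_less_iff by blast
  moreover have "0 < 1 / real (Suc i)"
    by simp
  ultimately show ?thesis
    by blast
qed

subsection \<open>The Besov energy of a set\<close>

definition besov_kernel :: "'a set \<Rightarrow> real \<Rightarrow> 'a \<Rightarrow> 'a \<Rightarrow> ennreal" where
  "besov_kernel E s x y =
    ennreal (\<bar>indicator E y - indicator E x\<bar> / (dist x y powr s * measure M (ball x (dist x y))))"

lemma borel_measurable_besov_kernel [measurable]:
  assumes [measurable]: "E \<in> sets M"
  shows "case_prod (besov_kernel E s) \<in> borel_measurable (M \<Otimes>\<^sub>M M)"
  unfolding besov_kernel_def by measurable

lemma besov_kernel_diag [simp]: "besov_kernel E s x x = 0"
  by (simp add: besov_kernel_def)

lemma besov_kernel_across_ball:
  assumes "0 < r" "0 \<le> s" "z \<in> ball x r \<inter> E" "y \<in> ball x r - E"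
  shows "dist z y < 2 * r"
    and "ennreal (1 / ((2 * r) powr s * (Cd\<^sup>2 * measure M (ball x r)))) \<le> besov_kernel E s z y"
proof -
  show "dist z y < 2 * r"
    using assms(3,4) dist_triangle3[of z y x] by auto
  have "0 < dist z y"
    using assms(3,4) by auto
  have "ball z (dist z y) \<subseteq> ball x (2 * (2 * r))"
  proof
    fix t assume "t \<in> ball z (dist z y)"
    moreover have "dist x t \<le> dist x z + dist z t"
      by (rule dist_triangle)
    ultimately show "t \<in> ball x (2 * (2 * r))"
      using assms(1,3) \<open>dist z y < 2 * r\<close> by simp
  qed
  then have "measure M (ball z (dist z y)) \<le> measure M (ball x (2 * (2 * r)))"
    by (intro finite_measure_mono) auto
  also have "\<dots> \<le> Cd * (Cd * measure M (ball x r))"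
    using measure_ball_double[of "2 * r" x] measure_ball_double[of r x] doubling_const \<open>0 < r\<close>
    by (smt (verit, best) mult_left_mono)
  finally have "dist z y powr s * measure M (ball z (dist z y)) \<le> (2 * r) powr s * (Cd\<^sup>2 * measure M (ball x r))"
    using \<open>0 < dist z y\<close> \<open>dist z y < 2 * r\<close> \<open>0 \<le> s\<close>
    by (intro mult_mono powr_mono2) (auto simp: power2_eq_square mult.assoc)
  moreover have "0 < dist z y powr s * measure M (ball z (dist z y))"
    using \<open>0 < dist z y\<close> measure_ball_pos by simp
  ultimately show "ennreal (1 / ((2 * r) powr s * (Cd\<^sup>2 * measure M (ball x r)))) \<le> besov_kernel E s z y"
    using assms(3,4) unfolding besov_kernel_def by (intro ennreal_leI) (simp add: frac_le)
qed

lemma ball_splits_energy: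
  assumes "0 < r" "2 * r \<le> d" "0 \<le> s" "0 \<le> c" and [measurable]: "E \<in> sets M"
    and "ball_splits E c x r"
  shows "ennreal (c\<^sup>2 * measure M (ball x r) / ((2 * r) powr s * Cd\<^sup>2))
    \<le> (\<integral>\<^sup>+ z\<in>ball x r. (\<integral>\<^sup>+ y\<in>ball z d. besov_kernel E s z y \<partial>M) \<partial>M)"
proof -
  define m where "m = measure M (ball x r)"
  define L where "L = 1 / ((2 * r) powr s * (Cd\<^sup>2 * m))"
  have "0 < m"
    unfolding m_def using measure_ball_pos \<open>0 < r\<close> by simp
  then have "0 < L"
    unfolding L_def using \<open>0 < r\<close> doubling_const by simp
  have pointwise: "indicator (ball x r \<inter> E) z * (\<integral>\<^sup>+ y. ennreal L * indicator (ball x r - E) y \<partial>M)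
      \<le> (\<integral>\<^sup>+ y\<in>ball z d. besov_kernel E s z y \<partial>M) * indicator (ball x r) z" for z
  proof (cases "z \<in> ball x r \<inter> E")
    case True
    then have "ennreal L * indicator (ball x r - E) y \<le> besov_kernel E s z y * indicator (ball z d) y" for y
      using besov_kernel_across_ball[OF \<open>0 < r\<close> \<open>0 \<le> s\<close> True, of y] \<open>2 * r \<le> d\<close>
      unfolding L_def m_def by (auto simp: indicator_def)
    then have "(\<integral>\<^sup>+ y. ennreal L * indicator (ball x r - E) y \<partial>M)
        \<le> (\<integral>\<^sup>+ y\<in>ball z d. besov_kernel E s z y \<partial>M)"
      by (intro nn_integral_mono)
    with True show ?thesis
      by simp
  qed simp
  have "c\<^sup>2 * m / ((2 * r) powr s * Cd\<^sup>2) = L * (c * m) * (c * m)"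
    unfolding L_def using \<open>0 < m\<close> by (simp add: field_simps power2_eq_square)
  also have "\<dots> \<le> L * measure M (ball x r - E) * measure M (ball x r \<inter> E)"
    using assms(4,6) \<open>0 < L\<close> \<open>0 < m\<close> unfolding ball_splits_def m_def
    by (intro mult_mono) auto
  finally have "ennreal (c\<^sup>2 * m / ((2 * r) powr s * Cd\<^sup>2))
      \<le> ennreal (L * measure M (ball x r - E) * measure M (ball x r \<inter> E))"
    by (rule ennreal_leI)
  also have "\<dots> = (\<integral>\<^sup>+ z. indicator (ball x r \<inter> E) z * (\<integral>\<^sup>+ y. ennreal L * indicator (ball x r - E) y \<partial>M) \<partial>M)"
    using \<open>0 < L\<close> by (simp add: nn_integral_cmult_indicator nn_integral_cmult mult.commute[of "indicator _ _"]
        emeasure_eq_measure ennreal_mult)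
  also have "\<dots> \<le> (\<integral>\<^sup>+ z\<in>ball x r. (\<integral>\<^sup>+ y\<in>ball z d. besov_kernel E s z y \<partial>M) \<partial>M)"
    using pointwise by (intro nn_integral_mono)
  finally show ?thesis
    unfolding m_def .
qed

lemma ball_splits_cost_le_energy:
  assumes "0 < r" "2 * r \<le> d" "0 \<le> s" "0 < c" "E \<in> sets M" "ball_splits E c x r"
  shows "emeasure M (ball x (5 * r)) / ennreal ((5 * r) powr s)
    \<le> ennreal (Cd ^ 5 * 2 powr s / c\<^sup>2) *
      (\<integral>\<^sup>+ z\<in>ball x r. (\<integral>\<^sup>+ y\<in>ball z d. besov_kernel E s z y \<partial>M) \<partial>M)"
proof -
  define m where "m = measure M (ball x r)"
  have "0 < m"
    unfolding m_def using measure_ball_pos \<open>0 < r\<close> by simp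
  have "measure M (ball x (5 * r)) \<le> measure M (ball x (2 * (2 * (2 * r))))"
    using \<open>0 < r\<close> by (intro measure_ball_mono) simp
  also have "\<dots> \<le> Cd * (Cd * (Cd * m))"
    using measure_ball_double[of "2 * (2 * r)" x] measure_ball_double[of "2 * r" x]
      measure_ball_double[of r x] doubling_const \<open>0 < r\<close> unfolding m_def
    by (smt (verit, best) mult_left_mono)
  finally have "measure M (ball x (5 * r)) / (5 * r) powr s \<le> Cd ^ 3 * m / r powr s"
    using \<open>0 < r\<close> \<open>0 \<le> s\<close> \<open>0 < m\<close> doubling_const
    by (intro frac_le powr_mono2) (auto simp: power3_eq_cube mult.assoc)
  also have "\<dots> = (Cd ^ 5 * 2 powr s / c\<^sup>2) * (c\<^sup>2 * m / ((2 * r) powr s * Cd\<^sup>2))"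
    using \<open>0 < c\<close> \<open>0 < r\<close> doubling_const
    by (simp add: powr_mult field_simps power2_eq_square power3_eq_cube eval_nat_numeral)
  finally have "emeasure M (ball x (5 * r)) / ennreal ((5 * r) powr s)
      \<le> ennreal (Cd ^ 5 * 2 powr s / c\<^sup>2) * ennreal (c\<^sup>2 * m / ((2 * r) powr s * Cd\<^sup>2))"
    using \<open>0 < r\<close> \<open>0 < m\<close> doubling_const
    by (simp add: emeasure_ball divide_ennreal ennreal_mult[symmetric] ennreal_leI)
  also have "\<dots> \<le> ennreal (Cd ^ 5 * 2 powr s / c\<^sup>2) *
      (\<integral>\<^sup>+ z\<in>ball x r. (\<integral>\<^sup>+ y\<in>ball z d. besov_kernel E s z y \<partial>M) \<partial>M)"
    using ball_splits_energy[OF \<open>0 < r\<close> \<open>2 * r \<le> d\<close> \<open>0 \<le> s\<close> _ assms(5,6)] \<open>0 < c\<close>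
    unfolding m_def by (intro mult_left_mono) auto
  finally show ?thesis .
qed

lemma codim_hausdorff_content_splitting_le:
  assumes "0 < c" "0 < \<rho>" "0 < d" "0 \<le> s" and [measurable]: "E \<in> sets M"
  shows "codim_hausdorff_content M s \<rho> {x. \<exists>\<^sub>F r in at_right 0. ball_splits E c x r}
    \<le> ennreal (Cd ^ 5 * 2 powr s / c\<^sup>2) * (\<integral>\<^sup>+ z. (\<integral>\<^sup>+ y\<in>ball z d. besov_kernel E s z y \<partial>M) \<partial>M)"
    (is "_ \<le> ennreal ?K * (\<integral>\<^sup>+ z. ?\<Psi> z \<partial>M)")
proof -
  define A where "A = {x. \<exists>\<^sub>F r in at_right 0. ball_splits E c x r}"
  obtain C R where "countable C" "C \<subseteq> A"
    and R: "\<And>x. x \<in> C \<Longrightarrow> 0 < R x \<and> R x < min (d / 2) (\<rho> / 5) \<and> ball_splits E c x (R x)"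
    and disj: "disjoint_family_on (\<lambda>x. ball x (R x)) C" and cover: "A \<subseteq> (\<Union>x\<in>C. ball x (5 * R x))"
    using frequently_Vitali_cover[of A "ball_splits E c" "min (d / 2) (\<rho> / 5)"] assms
    unfolding A_def by auto
  have "codim_hausdorff_content M s \<rho> A
      \<le> (\<integral>\<^sup>+ x. emeasure M (ball x (5 * R x)) / ennreal ((5 * R x) powr s) \<partial>count_space C)"
    using R by (intro codim_hausdorff_content_le_cover[OF \<open>countable C\<close> _ cover]) force
  also have "\<dots> \<le> (\<integral>\<^sup>+ x. ennreal ?K * (\<integral>\<^sup>+ z\<in>ball x (R x). ?\<Psi> z \<partial>M) \<partial>count_space C)"
    using assms by (intro nn_integral_mono ball_splits_cost_le_energy) (auto dest!: R)
  also have "\<dots> = ennreal ?K * (\<integral>\<^sup>+ x. (\<integral>\<^sup>+ z\<in>ball x (R x). ?\<Psi> z \<partial>M) \<partial>count_space C)"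
    by (rule nn_integral_cmult) simp
  also have "\<dots> \<le> ennreal ?K * (\<integral>\<^sup>+ z. ?\<Psi> z \<partial>M)"
    using \<open>countable C\<close> disj by (intro mult_left_mono nn_integral_disjoint_family_on_le) auto
  finally show ?thesis
    unfolding A_def .
qed

lemma codim_hausdorff_content_splitting_eq_0:
  assumes "0 < c" "0 < \<rho>" "0 \<le> s" "E \<in> sets M"
    and finite_energy: "(\<integral>\<^sup>+ x. (\<integral>\<^sup>+ y. besov_kernel E s x y \<partial>M) \<partial>M) < \<infinity>"
  shows "codim_hausdorff_content M s \<rho> {x. \<exists>\<^sub>F r in at_right 0. ball_splits E c x r} = 0"
    (is "codim_hausdorff_content M s \<rho> ?A = 0")
proof -
  define K where "K = Cd ^ 5 * 2 powr s / c\<^sup>2"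
  have "0 < K"
    unfolding K_def using \<open>0 < c\<close> doubling_const by simp
  have "codim_hausdorff_content M s \<rho> ?A \<le> 0 + ennreal e"
    if "0 < e" for e
  proof -
    have "0 < ennreal (e / K)"
      using \<open>0 < e\<close> \<open>0 < K\<close> by simp
    then obtain d where "0 < d" and d: "(\<integral>\<^sup>+ z. (\<integral>\<^sup>+ y\<in>ball z d. besov_kernel E s z y \<partial>M) \<partial>M) < ennreal (e / K)"
      using nn_integral_near_diagonal_small[OF borel_measurable_besov_kernel[OF \<open>E \<in> sets M\<close>]
          besov_kernel_diag finite_energy]
      by blast
    have "codim_hausdorff_content M s \<rho> ?A
        \<le> ennreal K * (\<integral>\<^sup>+ z. (\<integral>\<^sup>+ y\<in>ball z d. besov_kernel E s z y \<partial>M) \<partial>M)"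
      unfolding K_def using \<open>0 < c\<close> \<open>0 < \<rho>\<close> \<open>0 < d\<close> \<open>0 \<le> s\<close> \<open>E \<in> sets M\<close>
      by (rule codim_hausdorff_content_splitting_le)
    also have "\<dots> \<le> ennreal K * ennreal (e / K)"
      using d by (intro mult_left_mono) auto
    also have "\<dots> = ennreal e"
      using \<open>0 < K\<close> \<open>0 < e\<close> by (simp add: ennreal_mult[symmetric])
    finally show ?thesis
      by simp
  qed
  then have "codim_hausdorff_content M s \<rho> ?A \<le> 0"
    by (rule ennreal_le_epsilon)
  then show ?thesis
    by simp
qed

lemma measure_boundary_frequently_ball_splits:
  assumes "E \<in> sets M" "x \<in> measure_boundary M E"
  obtains c where "0 < c" "\<exists>\<^sub>F r in at_right 0. ball_splits E c x r"
proof -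
  let ?f = "ball_density E x"
  have pos: "\<forall>\<^sub>F r in at_right 0. 0 < (r::real)"
    by (rule eventually_at_right_less)
  have "- E \<in> sets M"
    using assms(1) space_eq by (metis Compl_eq_Diff_UNIV sets.compl_sets)
  have compl: "ball_density (- E) x r = 1 - ?f r" if "0 < r" for r
    using ball_density_Compl[OF that assms(1)] .
  obtain a1 where "0 < a1" and a1: "\<exists>\<^sub>F r in at_right 0. a1 < ?f r"
    using assms(2) unfolding measure_boundary_def ball_density_def
    by (auto elim: Limsup_pos_frequently_less)
  obtain a2 where "0 < a2" and "\<exists>\<^sub>F r in at_right 0. a2 < ball_density (- E) x r"
    using assms(2) unfolding measure_boundary_def ball_density_def
    by (auto simp: Diff_eq elim: Limsup_pos_frequently_less)
  then have a2: "\<exists>\<^sub>F r in at_right 0. a2 < 1 - ?f r"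
    by (elim frequently_elim1[OF frequently_eventually_frequently[OF _ pos]]) (auto simp: compl)
  define a where "a = min (min a1 a2) 1"
  have "0 < a" "a \<le> 1"
    unfolding a_def using \<open>0 < a1\<close> \<open>0 < a2\<close> by auto
  have large: "\<exists>\<^sub>F r in at_right 0. a < ?f r" "\<exists>\<^sub>F r in at_right 0. a < 1 - ?f r"
    using a1 a2 unfolding a_def by (auto elim: frequently_elim1)
  have "?f r' \<le> Cd * ?f r" if "0 < r'" "r' \<le> r" "r \<le> 2 * r'" for r r'
    using ball_density_doubling[OF that assms(1)] .
  moreover have "1 - ?f r' \<le> Cd * (1 - ?f r)" if "0 < r'" "r' \<le> r" "r \<le> 2 * r'" for r r'
    using ball_density_doubling[OF that \<open>- E \<in> sets M\<close>, of x] compl[of r] compl[of r'] that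
    by simp
  ultimately have "\<exists>\<^sub>F r in at_right 0. a / (2 * Cd) \<le> ?f r \<and> a / (2 * Cd) \<le> 1 - ?f r"
    using frequently_doubling_ratios_large[of ?f Cd a] doubling_const \<open>0 < a\<close> \<open>a \<le> 1\<close> large
    by blast
  then have "\<exists>\<^sub>F r in at_right 0. ball_splits E (a / (2 * Cd)) x r"
    by (elim frequently_elim1[OF frequently_eventually_frequently[OF _ pos]])
      (auto simp: ball_splits_iff_density compl)
  moreover have "0 < a / (2 * Cd)"
    using \<open>0 < a\<close> doubling_const by simp
  ultimately show thesis
    using that by blast
qed

lemma ball_splits_mono: "ball_splits E c x r \<Longrightarrow> c' \<le> c \<Longrightarrow> ball_splits E c' x r"
  unfolding ball_splits_def by (meson measure_nonneg mult_right_mono order_trans)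

lemma measure_boundary_subset_splitting:
  assumes "E \<in> sets M"
  shows "measure_boundary M E \<subseteq> (\<Union>k. {x. \<exists>\<^sub>F r in at_right 0. ball_splits E (1 / Suc k) x r})"
proof
  fix x assume "x \<in> measure_boundary M E"
  then obtain c where "0 < c" and splits: "\<exists>\<^sub>F r in at_right 0. ball_splits E c x r"
    using measure_boundary_frequently_ball_splits[OF assms] by blast
  then obtain k where "1 / Suc k < c"
    using nat_approx_posE by blast
  with splits have "\<exists>\<^sub>F r in at_right 0. ball_splits E (1 / Suc k) x r"
    by (elim frequently_elim1) (simp add: ball_splits_mono)
  then show "x \<in> (\<Union>k. {x. \<exists>\<^sub>F r in at_right 0. ball_splits E (1 / Suc k) x r})"
    by blast
qed

lemma codim_hausdorff_measure_boundary_eq_0: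
  assumes "0 \<le> s" "E \<in> sets M"
    and "(\<integral>\<^sup>+ x. (\<integral>\<^sup>+ y. besov_kernel E s x y \<partial>M) \<partial>M) < \<infinity>"
  shows "codim_hausdorff M s (measure_boundary M E) = 0"
proof -
  have "codim_hausdorff_content M s \<rho> (measure_boundary M E) = 0" if "0 < \<rho>" for \<rho>
  proof -
    have "codim_hausdorff_content M s \<rho> (measure_boundary M E)
        \<le> codim_hausdorff_content M s \<rho> (\<Union>k. {x. \<exists>\<^sub>F r in at_right 0. ball_splits E (1 / Suc k) x r})"
      using measure_boundary_subset_splitting[OF assms(2)] by (rule codim_hausdorff_content_mono)
    also have "\<dots> = 0"
      using that assms by (intro codim_hausdorff_content_UN_eq_0 codim_hausdorff_content_splitting_eq_0) auto
    finally show ?thesis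
      by simp
  qed
  then show ?thesis
    unfolding codim_hausdorff_def by simp
qed

end

theorem theorem1p2:
  fixes M :: "'a::metric_space measure" and s :: real and E :: "'a set"
  assumes "compact (UNIV :: 'a set)"
    and "space M = UNIV"
    and "doubling_measure M"
    and "borel_regular M"
    and "0 < s" and "s < 1"
    and "indicator E \<in> besov_11 M s"
  shows "codim_hausdorff M s (measure_boundary M E) = 0"
proof -
  obtain Cd where "1 \<le> Cd" and doubling: "\<And>x r. 0 < r \<Longrightarrow> 0 < emeasure M (ball x (2 * r)) \<and>
      emeasure M (ball x (2 * r)) \<le> ennreal Cd * emeasure M (ball x r) \<and> emeasure M (ball x r) < \<infinity>"
    using assms(3) unfolding doubling_measure_def by blast
  interpret compact_doubling_space M Cd
    using assms(1,2,4) \<open>1 \<le> Cd\<close> doubling unfolding borel_regular_def by unfold_locales auto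
  have "integrable M (indicator E :: 'a \<Rightarrow> real)"
    and energy: "(\<integral>\<^sup>+ x. (\<integral>\<^sup>+ y. besov_kernel E s x y \<partial>M) \<partial>M) < \<infinity>"
    using assms(7) unfolding besov_11_def besov_kernel_def by auto
  then have "E \<in> sets M"
    using borel_measurable_indicator_iff[of E M] space_eq by (auto dest: borel_measurable_integrable)
  \<comment> \<open>the argument works for every \<open>s \<ge> 0\<close>\<close>
  then show ?thesis
    using codim_hausdorff_measure_boundary_eq_0 \<open>0 < s\<close> energy by simp
qed

end
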